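(* Let $X$ be a topological vector space over $\mathbb{K}$, let $M\subset X$, and let $\alpha\ge\aleph_0$ be a cardinal with $w(X)\le\alpha$. Then: (i) $M$ is pointwise $\alpha$-dense-lineable if and only if $M$ is $\alpha$-infinitely pointwise $\alpha$-dense-lineable; (ii) for every cardinal $\gamma<\alpha$, $M$ is $(\gamma,\alpha)$-dense-lineable if and only if $M$ is $\alpha$-infinitely $(\gamma,\alpha)$-dense-lineable.
   Context: The weight $w(X)$ is the smallest cardinality of a base for the topology of $X$. $M$ is $\gamma$-lineable if there is a linear subspace of dimension $\gamma$ contained in $M\cup\{0\}$. $M$ is pointwise $\alpha$-dense-lineable if for each $x\in M$ there is a dense linear subspace $Y$ of $X$ with $\dim(Y)=\alpha$ and $x\in Y\subset M\cup\{0\}$. $M$ is $\alpha$-infinitely pointwise $\alpha$-dense-lineable if for each $x\in M$ there is a family $\{Y_\kappa\}_{\kappa<\alpha}$ of dense $\alpha$-dimensional subspaces of $X$ with $x\in Y_\kappa\subset M\cup\{0\}$ for all $\kappa$ and $Y_{\kappa_1}\cap Y_{\kappa_2}=\mathrm{span}(x)$ for $\kappa_1\ne\kappa_2$. For $\gamma<\alpha$, $M$ is $(\gamma,\alpha)$-dense-lineable if $M$ is $\gamma$-lineable and for every $\gamma$-dimensional subspace $W\subset M\cup\{0\}$ there is a dense $\alpha$-dimensional subspace $Y$ of $X$ with $W\subset Y\subset M\cup\{0\}$. $M$ is $\alpha$-infinitely $(\gamma,\alpha)$-dense-lineable if $M$ is $\gamma$-lineable and for every $\gamma$-dimensional subspace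 $W\subset M\cup\{0\}$ there is a family $\{Y_\kappa\}_{\kappa<\alpha}$ of dense $\alpha$-dimensional subspaces of $X$ with $W\subset Y_\kappa\subset M\cup\{0\}$ for all $\kappa$ and $Y_{\kappa_1}\cap Y_{\kappa_2}=W$ for $\kappa_1\neq\kappa_2$. *)

theory Defs
  imports "HOL-Analysis.Analysis"
begin

definition tvs :: "('k::real_normed_field \<Rightarrow> 'a::{ab_group_add,topological_space} \<Rightarrow> 'a) \<Rightarrow> bool" where
  "tvs sm \<longleftrightarrow> vector_space sm
     \<and> continuous_on UNIV (\<lambda>p::'a \<times> 'a. fst p + snd p)
     \<and> continuous_on UNIV (\<lambda>p::'k \<times> 'a. sm (fst p) (snd p))"

definition weight_le :: "'a::topological_space itself \<Rightarrow> 'i set \<Rightarrow> bool" where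
  "weight_le X I \<longleftrightarrow> (\<exists>B::'a set set. topological_basis B \<and> (card_of B, card_of I) \<in> ordLeq)"

definition dim_eq :: "('k::field \<Rightarrow> 'a::ab_group_add \<Rightarrow> 'a) \<Rightarrow> 'a set \<Rightarrow> 'i set \<Rightarrow> bool" where
  "dim_eq sm Y I \<longleftrightarrow> (\<exists>B. \<not> module.dependent sm B \<and> module.span sm B = Y \<and> (card_of B, card_of I) \<in> ordIso)"

definition dense_subspace :: "('k::field \<Rightarrow> 'a::{ab_group_add,topological_space} \<Rightarrow> 'a) \<Rightarrow> 'a set \<Rightarrow> bool" where
  "dense_subspace sm Y \<longleftrightarrow> module.subspace sm Y \<and> closure Y = UNIV"

definition lineable :: "('k::field \<Rightarrow> 'a::ab_group_add \<Rightarrow> 'a) \<Rightarrow> 'a set \<Rightarrow> 'g set \<Rightarrow> bool" where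
  "lineable sm M G \<longleftrightarrow> (\<exists>W. module.subspace sm W \<and> dim_eq sm W G \<and> W \<subseteq> M \<union> {0})"

definition pointwise_dense_lineable ::
  "('k::field \<Rightarrow> 'a::{ab_group_add,topological_space} \<Rightarrow> 'a) \<Rightarrow> 'a set \<Rightarrow> 'i set \<Rightarrow> bool" where
  "pointwise_dense_lineable sm M I \<longleftrightarrow>
     (\<forall>x\<in>M. \<exists>Y. dense_subspace sm Y \<and> dim_eq sm Y I \<and> x \<in> Y \<and> Y \<subseteq> M \<union> {0})"

definition infinitely_pointwise_dense_lineable ::
  "('k::field \<Rightarrow> 'a::{ab_group_add,topological_space} \<Rightarrow> 'a) \<Rightarrow> 'a set \<Rightarrow> 'i set \<Rightarrow> bool" where
  "infinitely_pointwise_dense_lineable sm M I \<longleftrightarrow>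
     (\<forall>x\<in>M. \<exists>Y :: 'i \<Rightarrow> 'a set.
        (\<forall>k\<in>I. dense_subspace sm (Y k) \<and> dim_eq sm (Y k) I \<and> x \<in> Y k \<and> Y k \<subseteq> M \<union> {0})
      \<and> (\<forall>k1\<in>I. \<forall>k2\<in>I. k1 \<noteq> k2 \<longrightarrow> Y k1 \<inter> Y k2 = module.span sm {x}))"

definition dense_lineable2 ::
  "('k::field \<Rightarrow> 'a::{ab_group_add,topological_space} \<Rightarrow> 'a) \<Rightarrow> 'a set \<Rightarrow> 'g set \<Rightarrow> 'i set \<Rightarrow> bool" where
  "dense_lineable2 sm M G I \<longleftrightarrow> lineable sm M G \<and>
     (\<forall>W. module.subspace sm W \<and> dim_eq sm W G \<and> W \<subseteq> M \<union> {0} \<longrightarrow>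
        (\<exists>Y. dense_subspace sm Y \<and> dim_eq sm Y I \<and> W \<subseteq> Y \<and> Y \<subseteq> M \<union> {0}))"

definition infinitely_dense_lineable2 ::
  "('k::field \<Rightarrow> 'a::{ab_group_add,topological_space} \<Rightarrow> 'a) \<Rightarrow> 'a set \<Rightarrow> 'g set \<Rightarrow> 'i set \<Rightarrow> bool" where
  "infinitely_dense_lineable2 sm M G I \<longleftrightarrow> lineable sm M G \<and>
     (\<forall>W. module.subspace sm W \<and> dim_eq sm W G \<and> W \<subseteq> M \<union> {0} \<longrightarrow>
        (\<exists>Y :: 'i \<Rightarrow> 'a set.
           (\<forall>k\<in>I. dense_subspace sm (Y k) \<and> dim_eq sm (Y k) I \<and> W \<subseteq> Y k \<and> Y k \<subseteq> M \<union> {0})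
         \<and> (\<forall>k1\<in>I. \<forall>k2\<in>I. k1 \<noteq> k2 \<longrightarrow> Y k1 \<inter> Y k2 = W)))"

end

theory Submission
  imports Defs
begin

(* Only the forward implications need work.  Let Y be a dense subspace of dimension alpha
   containing W, where dim W < alpha (W = span {x} in part (i)).  Well-order I x I in order
   type alpha and choose by transfinite recursion vectors f (k, j) in Y that lie in the j-th
   set of a pi-base of size at most alpha and outside the span of W and of all earlier
   choices.  Such a vector exists because a subspace spanned by fewer than alpha vectors
   cannot contain Y, and because for z outside a subspace S the line y + K z through a point
   of Y in an open set leaves S while staying in the open set and in Y.  Then the subspaces
   Z k = span (W \<union> {f (k, j) | j}) are dense of dimension alpha, and by linear independence
   of all the chosen vectors over W any two of them meet exactly in W. *)

unbundle cardinal_syntax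

lemma well_order_recursive_choice:
  assumes r: "Well_order r"
    and step: "\<And>a h. a \<in> Field r \<Longrightarrow> \<exists>y. P (h ` underS r a) a y"
  shows "\<exists>f. \<forall>a\<in>Field r. P (f ` underS r a) a (f a)"
proof -
  define f where "f = wfrec (r - Id) (\<lambda>h a. SOME y. P (h ` underS r a) a y)"
  have f_eq: "f a = (SOME y. P (f ` underS r a) a y)" for a
  proof -
    have "f a = (SOME y. P (cut f (r - Id) a ` underS r a) a y)"
      unfolding f_def by (rule wfrec[OF wo_rel.WF[unfolded wo_rel_def, OF r]])
    also have "cut f (r - Id) a ` underS r a = f ` underS r a"
      by (auto simp: underS_def cut_apply)
    finally show ?thesis .
  qed
  have "P (f ` underS r a) a (f a)" if "a \<in> Field r" for a
    unfolding f_eq[of a] by (rule someI_ex[OF step[OF that]])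
  then show ?thesis by blast
qed

lemma inj_on_if_notin_image_underS:
  assumes r: "Well_order r" and fresh: "\<And>a. a \<in> Field r \<Longrightarrow> f a \<notin> f ` underS r a"
  shows "inj_on f (Field r)"
proof (rule inj_onI, rule ccontr)
  fix a b assume ab: "a \<in> Field r" "b \<in> Field r" "f a = f b" "a \<noteq> b"
  have "(a, b) \<in> r \<or> (b, a) \<in> r"
    using r ab unfolding well_order_on_def linear_order_on_def total_on_def by blast
  then have "a \<in> underS r b \<or> b \<in> underS r a"
    using ab(4) unfolding underS_def by auto
  then show False
    using fresh ab(1-3) by (metis image_eqI)
qed

lemma closure_eq_UNIV_iff:
  "closure S = UNIV \<longleftrightarrow> (\<forall>U. open U \<longrightarrow> U \<noteq> {} \<longrightarrow> U \<inter> S \<noteq> {})"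
proof
  assume "closure S = UNIV"
  then show "\<forall>U. open U \<longrightarrow> U \<noteq> {} \<longrightarrow> U \<inter> S \<noteq> {}"
    by (metis Int_UNIV_right open_Int_closure_eq_empty)
next
  assume meets: "\<forall>U. open U \<longrightarrow> U \<noteq> {} \<longrightarrow> U \<inter> S \<noteq> {}"
  have "- closure S \<inter> S = {}"
    using closure_subset by blast
  then have "- closure S = {}"
    using meets by (meson closed_closure open_Compl)
  then show "closure S = UNIV" by auto
qed

context vector_space
begin

lemma independent_Un_image_Union_under:
  assumes r: "Well_order r" and A: "A \<subseteq> Field r" and B: "independent B"
    and ind: "\<And>a. a \<in> A \<Longrightarrow> independent (B \<union> f ` under r a)"
  shows "independent (B \<union> f ` (\<Union>a\<in>A. under r a))"
proof -
  have tot: "total_on (Field r) r" and tr: "trans r"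
    using r unfolding well_order_on_def linear_order_on_def partial_order_on_def preorder_on_def
    by auto
  let ?C = "insert B ((\<lambda>a. B \<union> f ` under r a) ` A)"
  have under_chain: "under r a \<subseteq> under r b \<or> under r b \<subseteq> under r a"
    if "a \<in> A" "b \<in> A" for a b
  proof (cases "a = b")
    case False
    then have "(a, b) \<in> r \<or> (b, a) \<in> r"
      using tot A that unfolding total_on_def by blast
    then show ?thesis
      using under_incr[OF tr] by blast
  qed simp
  have "c \<subseteq> d \<or> d \<subseteq> c" if cd: "c \<in> ?C" "d \<in> ?C" for c d
  proof -
    consider "c = B" | "d = B"
      | a b where "a \<in> A" "b \<in> A" "c = B \<union> f ` under r a" "d = B \<union> f ` under r b"
      using cd by blast
    then show ?thesis
    proof cases
      case 3
      then show ?thesis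
        using under_chain[of a b] image_mono[of _ _ f] by blast
    qed (use cd in auto)
  qed
  moreover have "independent c" if "c \<in> ?C" for c
    using that B ind by auto
  ultimately have "independent (\<Union>?C)"
    by (rule independent_Union_directed)
  moreover have "\<Union>?C = B \<union> f ` (\<Union>a\<in>A. under r a)"
    by auto
  ultimately show ?thesis by simp
qed

lemma independent_Un_image_well_order:
  assumes r: "Well_order r" and B: "independent B"
    and fresh: "\<And>a. a \<in> Field r \<Longrightarrow> f a \<notin> span (B \<union> f ` underS r a)"
  shows "independent (B \<union> f ` Field r)"
proof -
  have wo: "wo_rel r"
    using r by (rule wo_rel.intro)
  have "independent (B \<union> f ` under r a)" if "a \<in> Field r" for a
    using that
  proof (induction a rule: wo_rel.well_order_induct[OF wo])
    case (1 a)
    have below: "independent (B \<union> f ` under r b)" if "b \<in> underS r a" for b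
    proof -
      have "b \<noteq> a" "(b, a) \<in> r"
        using that by (auto simp: underS_def)
      moreover have "b \<in> Field r"
        using \<open>(b, a) \<in> r\<close> by (rule FieldI1)
      ultimately show ?thesis
        using "1"(1) by blast
    qed
    have "independent (B \<union> f ` (\<Union>b\<in>underS r a. under r b))"
      by (rule independent_Un_image_Union_under[OF r _ B below])
        (auto simp: underS_def intro: FieldI1)
    then have "independent (B \<union> f ` underS r a)"
      using wo_rel.ofilter_under_UNION[OF wo wo_rel.underS_ofilter[OF wo], symmetric] by simp
    then have "independent (insert (f a) (B \<union> f ` underS r a))"
      using fresh[OF "1.prems"] by (rule independent_insertI[rotated])
    moreover have "under r a = insert a (underS r a)"
      using Refl_under_underS[OF wo_rel.REFL[OF wo] "1.prems"] by auto
    ultimately show ?case by simp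
  qed
  then show ?thesis
    using independent_Un_image_Union_under[OF r subset_refl B]
      wo_rel.ofilter_under_UNION[OF wo wo_rel.Field_ofilter[OF wo], symmetric]
    by simp
qed

lemma span_Un_Int_span_Un_subset:
  assumes "independent (A \<union> B \<union> C)" "B \<inter> C = {}"
  shows "span (A \<union> B) \<inter> span (A \<union> C) \<subseteq> span A"
proof
  fix v assume v: "v \<in> span (A \<union> B) \<inter> span (A \<union> C)"
  let ?S = "A \<union> B \<union> C"
  have "representation ?S v = representation (A \<union> B) v"
    "representation ?S v = representation (A \<union> C) v"
    using representation_extend[OF assms(1)] v by auto
  then have "representation ?S v b \<noteq> 0 \<Longrightarrow> b \<in> (A \<union> B) \<inter> (A \<union> C)" for b
    using representation_ne_zero by (metis IntI)
  then have support: "{b. representation ?S v b \<noteq> 0} \<subseteq> A"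
    using assms(2) by blast
  have "v \<in> span ?S"
    using v span_mono[of "A \<union> B" ?S] by auto
  then have "v = (\<Sum>b | representation ?S v b \<noteq> 0. representation ?S v b *s b)"
    using sum_nonzero_representation_eq[OF assms(1)] by simp
  also have "\<dots> \<in> span A"
    by (intro span_sum span_scale span_base) (use support in auto)
  finally show "v \<in> span A" .
qed

lemma card_of_independent_le_span:
  assumes "independent B" "B \<subseteq> span T"
  shows "|B| \<le>o |T|"
proof -
  obtain C where C: "C \<subseteq> T" "independent C" "T \<subseteq> span C"
    using maximal_independent_subset by blast
  obtain B' where B': "B \<subseteq> B'" "B' \<subseteq> span T" "independent B'" "span T \<subseteq> span B'"
    using maximal_independent_subset_extend[OF assms(2,1)] by blast
  have "span B' = span T"
    using B' by (meson span_minimal subspace_span subset_antisym)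
  moreover have "span C = span T"
    using C span_minimal[of T "span C"] span_mono[of C T] by auto
  ultimately have "span B' = span C" by simp
  then obtain h where "bij_betw h B' C"
    using bij_if_span_eq_span_bases[OF B'(3) C(2)] by auto
  then have "|B'| =o |C|"
    using card_of_ordIso by blast
  moreover have "|B| \<le>o |B'|" "|C| \<le>o |T|"
    using B'(1) C(1) card_of_mono1 by blast+
  ultimately show ?thesis
    using ordIso_iff_ordLeq ordLeq_transitive by blast
qed

lemma dim_eq_not_subset_span:
  assumes "dim_eq scale Y I" "|T| <o |I|"
  shows "\<not> Y \<subseteq> span T"
proof
  assume "Y \<subseteq> span T"
  obtain BY where "independent BY" "span BY = Y" "|BY| =o |I|"
    using assms(1) unfolding dim_eq_def by auto
  moreover have "BY \<subseteq> span T"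
    using \<open>span BY = Y\<close> \<open>Y \<subseteq> span T\<close> span_superset by blast
  ultimately have "|I| \<le>o |T|"
    using card_of_independent_le_span ordIso_ordLeq_trans ordIso_symmetric by blast
  then show False
    using assms(2) not_ordLess_ordLeq by blast
qed

lemma dim_eq_span_Un_row:
  assumes "infinite I" "independent (B \<union> f ` (I \<times> I))" "inj_on f (I \<times> I)" "|B| \<le>o |I|"
    and "k \<in> I"
  shows "dim_eq scale (span (B \<union> (\<lambda>j. f (k, j)) ` I)) I"
proof -
  let ?R = "B \<union> (\<lambda>j. f (k, j)) ` I"
  have "independent ?R"
    using assms(5) by (intro independent_mono[OF assms(2)]) auto
  moreover have "|?R| \<le>o |I|"
    using assms(1,4) card_of_image[of "\<lambda>j. f (k, j)" I]
    by (intro card_of_Un_ordLeq_infinite_Field) (simp_all add: Field_card_of card_of_card_order_on)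
  moreover have "inj_on (\<lambda>j. f (k, j)) I"
    using assms(3,5) by (auto simp: inj_on_def)
  then have "|I| \<le>o |?R|"
    by (intro card_of_ordLeq[THEN iffD1] exI[of _ "\<lambda>j. f (k, j)"]) auto
  ultimately show ?thesis
    unfolding dim_eq_def using ordIso_iff_ordLeq by blast
qed

lemma span_Un_row_Int_span_Un_row:
  assumes "independent (B \<union> f ` (I \<times> I))" "inj_on f (I \<times> I)"
    and "k1 \<in> I" "k2 \<in> I" "k1 \<noteq> k2"
  shows "span (B \<union> (\<lambda>j. f (k1, j)) ` I) \<inter> span (B \<union> (\<lambda>j. f (k2, j)) ` I) = span B"
proof
  have "independent (B \<union> (\<lambda>j. f (k1, j)) ` I \<union> (\<lambda>j. f (k2, j)) ` I)"
    using assms(3,4) by (intro independent_mono[OF assms(1)]) auto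
  moreover have "(\<lambda>j. f (k1, j)) ` I \<inter> (\<lambda>j. f (k2, j)) ` I = {}"
    using assms(2-5) unfolding inj_on_def by blast
  ultimately show "span (B \<union> (\<lambda>j. f (k1, j)) ` I) \<inter> span (B \<union> (\<lambda>j. f (k2, j)) ` I) \<subseteq> span B"
    by (rule span_Un_Int_span_Un_subset)
qed (intro Int_greatest span_mono; blast)

end

lemma dense_subspace_span:
  fixes sm :: "'k::field \<Rightarrow> 'a::{ab_group_add,topological_space} \<Rightarrow> 'a"
  assumes "vector_space sm" "closure S = UNIV"
  shows "dense_subspace sm (module.span sm S)"
proof -
  interpret vector_space sm by fact
  have "closure S \<subseteq> closure (span S)"
    by (rule closure_mono[OF span_superset])
  then show ?thesis
    unfolding dense_subspace_def using assms(2) subspace_span by auto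
qed

lemma tvs_continuous_on_line:
  fixes sm :: "'k::real_normed_field \<Rightarrow> 'a::{ab_group_add,topological_space} \<Rightarrow> 'a"
  assumes "tvs sm"
  shows "continuous_on UNIV (\<lambda>c. y + sm c z)"
proof -
  have add: "continuous_on UNIV (\<lambda>p::'a \<times> 'a. fst p + snd p)"
    and scale: "continuous_on UNIV (\<lambda>p::'k \<times> 'a. sm (fst p) (snd p))"
    using assms unfolding tvs_def by auto
  have "continuous_on UNIV (\<lambda>c. (c, z))"
    by (intro continuous_intros)
  from continuous_on_compose2[OF scale this] have "continuous_on UNIV (\<lambda>c. sm c z)"
    by simp
  then have "continuous_on UNIV (\<lambda>c. (y, sm c z))"
    by (intro continuous_intros)
  from continuous_on_compose2[OF add this] show ?thesis
    by simp
qed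

lemma tvs_line_meets_open_off_subspace:
  fixes sm :: "'k::real_normed_field \<Rightarrow> 'a::{ab_group_add,topological_space} \<Rightarrow> 'a"
  assumes tv: "tvs sm" and S: "module.subspace sm S" and z: "z \<notin> S"
    and U: "open U" "y \<in> U"
  shows "\<exists>c. y + sm c z \<in> U - S"
proof -
  interpret vector_space sm
    using tv unfolding tvs_def by simp
  show ?thesis
  proof (cases "y \<in> S")
    case False
    then show ?thesis
      using U by (intro exI[of _ 0]) simp
  next
    case True
    have "open ((\<lambda>c. y + sm c z) -` U)"
      using continuous_on_open_vimage[OF open_UNIV] tvs_continuous_on_line[OF tv] U(1) by auto
    moreover have "0 \<in> (\<lambda>c. y + sm c z) -` U"
      using U(2) by simp
    ultimately obtain e where "e > 0" and e: "ball 0 e \<subseteq> (\<lambda>c. y + sm c z) -` U"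
      by (meson open_contains_ball)
    define c :: 'k where "c = of_real (e / 2)"
    have "c \<noteq> 0" "c \<in> ball 0 e"
      using \<open>e > 0\<close> by (simp_all add: c_def)
    have "y + sm c z \<notin> S"
    proof
      assume "y + sm c z \<in> S"
      then have "sm c z \<in> S"
        using subspace_diff[OF S _ True] by force
      then have "sm (inverse c) (sm c z) \<in> S"
        by (rule subspace_scale[OF S])
      with \<open>c \<noteq> 0\<close> z show False by simp
    qed
    with e \<open>c \<in> ball 0 e\<close> show ?thesis by blast
  qed
qed

lemma dense_subspace_meets_open_off_subspace:
  assumes tv: "tvs sm" and Y: "dense_subspace sm Y" and S: "module.subspace sm S"
    and not_sub: "\<not> Y \<subseteq> S" and U: "open U" "U \<noteq> {}"
  shows "\<exists>y\<in>Y \<inter> U. y \<notin> S"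
proof -
  interpret vector_space sm
    using tv unfolding tvs_def by simp
  obtain z where z: "z \<in> Y" "z \<notin> S"
    using not_sub by blast
  obtain y where y: "y \<in> U" "y \<in> Y"
    using Y U unfolding dense_subspace_def closure_eq_UNIV_iff by blast
  obtain c where c: "y + sm c z \<in> U - S"
    using tvs_line_meets_open_off_subspace[OF tv S z(2) U(1) y(1)] by blast
  have "y + sm c z \<in> Y"
    using Y y(2) z(1) unfolding dense_subspace_def by (simp add: subspace_add subspace_scale)
  with c show ?thesis by blast
qed

lemma weight_le_imp_pi_base:
  fixes I :: "'i set"
  assumes "weight_le TYPE('a::topological_space) I" "I \<noteq> {}"
  shows "\<exists>U :: 'i \<Rightarrow> 'a set. (\<forall>j\<in>I. open (U j) \<and> U j \<noteq> {})
           \<and> (\<forall>V. open V \<longrightarrow> V \<noteq> {} \<longrightarrow> (\<exists>j\<in>I. U j \<subseteq> V))"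
proof -
  obtain B :: "'a set set" where B: "topological_basis B" "|B| \<le>o |I|"
    using assms(1) unfolding weight_le_def by auto
  obtain b where "b \<in> B"
    using topological_basisE[OF B(1) open_UNIV UNIV_I] by metis
  then have "B \<noteq> {}" by blast
  then obtain g where g: "g ` I = B"
    using card_of_ordLeq2[OF \<open>B \<noteq> {}\<close>, of I] B(2) by blast
  define U where "U j = (if g j = {} then UNIV else g j)" for j
  show ?thesis
  proof (intro exI[of _ U] conjI ballI allI impI)
    fix j assume "j \<in> I"
    then have "open (g j)"
      using g B(1) topological_basis_open by blast
    then show "open (U j)" "U j \<noteq> {}"
      unfolding U_def by auto
  next
    fix V :: "'a set" assume V: "open V" "V \<noteq> {}"
    then obtain x where "x \<in> V" by blast
    then obtain b where "b \<in> B" "x \<in> b" "b \<subseteq> V"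
      using topological_basisE[OF B(1) V(1)] by metis
    moreover obtain j where "j \<in> I" "g j = b"
      using g \<open>b \<in> B\<close> by blast
    ultimately show "\<exists>j\<in>I. U j \<subseteq> V"
      unfolding U_def by auto
  qed
qed

lemma tvs_independent_family_in_open_sets:
  fixes sm :: "'k::real_normed_field \<Rightarrow> 'a::{ab_group_add,topological_space} \<Rightarrow> 'a"
    and I :: "'i set" and U :: "'i \<Rightarrow> 'a set"
  assumes tv: "tvs sm" and inf: "infinite I"
    and Y: "dense_subspace sm Y" "dim_eq sm Y I"
    and B: "\<not> module.dependent sm B" "|B| <o |I|"
    and U: "\<forall>j\<in>I. open (U j) \<and> U j \<noteq> {}"
  shows "\<exists>f. inj_on f (I \<times> I) \<and> \<not> module.dependent sm (B \<union> f ` (I \<times> I))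
           \<and> (\<forall>k\<in>I. \<forall>j\<in>I. f (k, j) \<in> Y \<inter> U j)"
proof -
  interpret vector_space sm
    using tv unfolding tvs_def by simp
  (* every initial segment of this well-order of I \<times> I has fewer than |I| elements *)
  let ?r = "|I \<times> I|"
  have step: "\<exists>y. y \<in> Y \<inter> U (snd a) \<and> y \<notin> span (B \<union> h ` underS ?r a)"
    if a: "a \<in> Field ?r" for a and h :: "'i \<times> 'i \<Rightarrow> 'a"
  proof -
    have "|underS ?r a| <o ?r"
      using card_of_underS[OF card_of_Card_order a] .
    with card_of_image have "|h ` underS ?r a| <o ?r"
      by (rule ordLeq_ordLess_trans)
    then have "|h ` underS ?r a| <o |I|"
      using card_of_Times_same_infinite[OF inf] by (rule ordLess_ordIso_trans)
    then have "\<not> Y \<subseteq> span (B \<union> h ` underS ?r a)"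
      using dim_eq_not_subset_span[OF Y(2)] card_of_Un_ordLess_infinite[OF inf B(2)] by blast
    moreover have "open (U (snd a))" "U (snd a) \<noteq> {}"
      using U a by (auto simp: Field_card_of)
    ultimately show ?thesis
      using dense_subspace_meets_open_off_subspace[OF tv Y(1) subspace_span] by blast
  qed
  obtain f where f: "\<forall>a\<in>Field ?r. f a \<in> Y \<inter> U (snd a) \<and> f a \<notin> span (B \<union> f ` underS ?r a)"
    using well_order_recursive_choice[OF card_of_Well_order,
        where P = "\<lambda>T a y. y \<in> Y \<inter> U (snd a) \<and> y \<notin> span (B \<union> T)", OF step]
    by blast
  have "f a \<notin> f ` underS ?r a" if "a \<in> Field ?r" for a
    using f that span_superset[of "B \<union> f ` underS ?r a"] by blast
  then have "inj_on f (Field ?r)"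
    by (rule inj_on_if_notin_image_underS[OF card_of_Well_order])
  moreover have "independent (B \<union> f ` Field ?r)"
    using f by (intro independent_Un_image_well_order[OF card_of_Well_order B(1)]) simp
  ultimately show ?thesis
    using f by (auto simp: Field_card_of)
qed

lemma tvs_dense_subspaces_pairwise_meeting_in:
  fixes sm :: "'k::real_normed_field \<Rightarrow> 'a::{ab_group_add,topological_space} \<Rightarrow> 'a"
    and I :: "'i set" and G :: "'g set"
  assumes tv: "tvs sm" and inf: "infinite I" and weight: "weight_le TYPE('a) I"
    and Y: "dense_subspace sm Y" "dim_eq sm Y I"
    and W: "dim_eq sm W G" "|G| <o |I|" "W \<subseteq> Y"
  shows "\<exists>Z :: 'i \<Rightarrow> 'a set.
           (\<forall>k\<in>I. dense_subspace sm (Z k) \<and> dim_eq sm (Z k) I \<and> W \<subseteq> Z k \<and> Z k \<subseteq> Y)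
         \<and> (\<forall>k1\<in>I. \<forall>k2\<in>I. k1 \<noteq> k2 \<longrightarrow> Z k1 \<inter> Z k2 = W)"
proof -
  interpret vector_space sm
    using tv unfolding tvs_def by simp
  obtain B where B: "independent B" "span B = W" "|B| =o |G|"
    using W(1) unfolding dim_eq_def by blast
  have "|B| <o |I|"
    using B(3) W(2) by (rule ordIso_ordLess_trans)
  obtain U :: "'i \<Rightarrow> 'a set" where U: "\<forall>j\<in>I. open (U j) \<and> U j \<noteq> {}"
    and U_below: "\<And>V. open V \<Longrightarrow> V \<noteq> {} \<Longrightarrow> \<exists>j\<in>I. U j \<subseteq> V"
    using weight_le_imp_pi_base[OF weight] inf by force
  obtain f where f_inj: "inj_on f (I \<times> I)" and f_indep: "independent (B \<union> f ` (I \<times> I))"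
    and f_in: "\<forall>k\<in>I. \<forall>j\<in>I. f (k, j) \<in> Y \<inter> U j"
    using tvs_independent_family_in_open_sets[OF tv inf Y B(1) \<open>|B| <o |I|\<close> U] by blast
  define Z where "Z k = span (B \<union> (\<lambda>j. f (k, j)) ` I)" for k
  have "dense_subspace sm (Z k)" if k: "k \<in> I" for k
  proof -
    have "closure (B \<union> (\<lambda>j. f (k, j)) ` I) = UNIV"
      unfolding closure_eq_UNIV_iff
    proof (intro allI impI)
      fix V :: "'a set" assume "open V" "V \<noteq> {}"
      then obtain j where "j \<in> I" "U j \<subseteq> V"
        using U_below by blast
      then show "V \<inter> (B \<union> (\<lambda>j. f (k, j)) ` I) \<noteq> {}"
        using f_in k by blast
    qed
    then show ?thesis
      unfolding Z_def by (rule dense_subspace_span[OF vector_space_axioms])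
  qed
  moreover have "dim_eq sm (Z k) I" if "k \<in> I" for k
    unfolding Z_def
    using dim_eq_span_Un_row[OF inf f_indep f_inj ordLess_imp_ordLeq[OF \<open>|B| <o |I|\<close>] that] .
  moreover have "W \<subseteq> Z k \<and> Z k \<subseteq> Y" if "k \<in> I" for k
  proof
    show "W \<subseteq> Z k"
      unfolding Z_def B(2)[symmetric] by (rule span_mono) simp
    have "B \<subseteq> Y"
      using B(2) W(3) span_superset by blast
    moreover have "subspace Y"
      using Y(1) unfolding dense_subspace_def by simp
    ultimately show "Z k \<subseteq> Y"
      unfolding Z_def using f_in that by (intro span_minimal) auto
  qed
  moreover have "Z k1 \<inter> Z k2 = W" if "k1 \<in> I" "k2 \<in> I" "k1 \<noteq> k2" for k1 k2
    unfolding Z_def B(2)[symmetric] using f_indep f_inj that by (rule span_Un_row_Int_span_Un_row)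
  ultimately show ?thesis
    by blast
qed

lemma dim_eq_span_singleton:
  assumes "vector_space sm"
  shows "dim_eq sm (module.span sm {x}) ({x} - {0})"
proof -
  interpret vector_space sm by fact
  have "independent ({x} - {0})"
  proof (cases "x = 0")
    case False
    then show ?thesis
      using independent_insertI[of x "{}"] by (simp add: span_empty independent_empty)
  qed (simp add: independent_empty)
  then show ?thesis
    unfolding dim_eq_def using card_of_refl span_delete_0 by blast
qed

lemma pointwise_dense_lineable_if_infinitely:
  assumes "I \<noteq> {}" "infinitely_pointwise_dense_lineable sm M I"
  shows "pointwise_dense_lineable sm M I"
  using assms unfolding infinitely_pointwise_dense_lineable_def pointwise_dense_lineable_def
  by (meson all_not_in_conv)

lemma dense_lineable2_if_infinitely:
  assumes "I \<noteq> {}" "infinitely_dense_lineable2 sm M G I"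
  shows "dense_lineable2 sm M G I"
  using assms unfolding infinitely_dense_lineable2_def dense_lineable2_def
  by (meson all_not_in_conv)

lemma infinitely_pointwise_dense_lineable_if_pointwise:
  fixes sm :: "'k::real_normed_field \<Rightarrow> 'a::{ab_group_add,topological_space} \<Rightarrow> 'a"
    and I :: "'i set"
  assumes tv: "tvs sm" and inf: "infinite I" and weight: "weight_le TYPE('a) I"
    and lineable: "pointwise_dense_lineable sm M I"
  shows "infinitely_pointwise_dense_lineable sm M I"
  unfolding infinitely_pointwise_dense_lineable_def
proof
  interpret vector_space sm
    using tv unfolding tvs_def by simp
  fix x assume "x \<in> M"
  then obtain Y where Y: "dense_subspace sm Y" "dim_eq sm Y I" "x \<in> Y" "Y \<subseteq> M \<union> {0}"
    using lineable unfolding pointwise_dense_lineable_def by blast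
  have "|{x} - {0}| <o |I|"
    using finite_ordLess_infinite[OF card_of_Well_order card_of_Well_order, of "{x} - {0}" I] inf
    by (simp add: Field_card_of)
  moreover have "span {x} \<subseteq> Y"
    using Y(1,3) unfolding dense_subspace_def by (simp add: span_minimal)
  ultimately obtain Z :: "'i \<Rightarrow> 'a set" where
    Z: "\<forall>k\<in>I. dense_subspace sm (Z k) \<and> dim_eq sm (Z k) I \<and> span {x} \<subseteq> Z k \<and> Z k \<subseteq> Y"
    and Z_meet: "\<forall>k1\<in>I. \<forall>k2\<in>I. k1 \<noteq> k2 \<longrightarrow> Z k1 \<inter> Z k2 = span {x}"
    using tvs_dense_subspaces_pairwise_meeting_in[OF tv inf weight Y(1,2)
        dim_eq_span_singleton[OF vector_space_axioms]] by metis
  have "x \<in> span {x}"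
    by (simp add: span_base)
  show "\<exists>Z :: 'i \<Rightarrow> 'a set.
      (\<forall>k\<in>I. dense_subspace sm (Z k) \<and> dim_eq sm (Z k) I \<and> x \<in> Z k \<and> Z k \<subseteq> M \<union> {0})
    \<and> (\<forall>k1\<in>I. \<forall>k2\<in>I. k1 \<noteq> k2 \<longrightarrow> Z k1 \<inter> Z k2 = span {x})"
  proof (intro exI[of _ Z] conjI ballI impI)
    fix k assume "k \<in> I"
    then show "dense_subspace sm (Z k)" "dim_eq sm (Z k) I" "x \<in> Z k" "Z k \<subseteq> M \<union> {0}"
      using Z Y(4) \<open>x \<in> span {x}\<close> by auto
  next
    fix k1 k2 assume "k1 \<in> I" "k2 \<in> I" "k1 \<noteq> k2"
    then show "Z k1 \<inter> Z k2 = span {x}"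
      using Z_meet by blast
  qed
qed

lemma infinitely_dense_lineable2_if_dense_lineable2:
  fixes sm :: "'k::real_normed_field \<Rightarrow> 'a::{ab_group_add,topological_space} \<Rightarrow> 'a"
    and I :: "'i set" and G :: "'g set"
  assumes tv: "tvs sm" and inf: "infinite I" and weight: "weight_le TYPE('a) I"
    and G: "|G| <o |I|" and lineable: "dense_lineable2 sm M G I"
  shows "infinitely_dense_lineable2 sm M G I"
  unfolding infinitely_dense_lineable2_def
proof (intro conjI allI impI)
  show "lineable sm M G"
    using lineable unfolding dense_lineable2_def by simp
next
  fix W assume W: "module.subspace sm W \<and> dim_eq sm W G \<and> W \<subseteq> M \<union> {0}"
  then obtain Y where Y: "dense_subspace sm Y" "dim_eq sm Y I" "W \<subseteq> Y" "Y \<subseteq> M \<union> {0}"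
    using lineable unfolding dense_lineable2_def by meson
  obtain Z :: "'i \<Rightarrow> 'a set" where
    Z: "\<forall>k\<in>I. dense_subspace sm (Z k) \<and> dim_eq sm (Z k) I \<and> W \<subseteq> Z k \<and> Z k \<subseteq> Y"
    and Z_meet: "\<forall>k1\<in>I. \<forall>k2\<in>I. k1 \<noteq> k2 \<longrightarrow> Z k1 \<inter> Z k2 = W"
    using tvs_dense_subspaces_pairwise_meeting_in[OF tv inf weight Y(1,2) _ G Y(3)] W by meson
  show "\<exists>Z :: 'i \<Rightarrow> 'a set.
      (\<forall>k\<in>I. dense_subspace sm (Z k) \<and> dim_eq sm (Z k) I \<and> W \<subseteq> Z k \<and> Z k \<subseteq> M \<union> {0})
    \<and> (\<forall>k1\<in>I. \<forall>k2\<in>I. k1 \<noteq> k2 \<longrightarrow> Z k1 \<inter> Z k2 = W)"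
  proof (intro exI[of _ Z] conjI ballI impI)
    fix k assume "k \<in> I"
    then show "dense_subspace sm (Z k)" "dim_eq sm (Z k) I" "W \<subseteq> Z k" "Z k \<subseteq> M \<union> {0}"
      using Z Y(4) by auto
  next
    fix k1 k2 assume "k1 \<in> I" "k2 \<in> I" "k1 \<noteq> k2"
    then show "Z k1 \<inter> Z k2 = W"
      using Z_meet by blast
  qed
qed

theorem theorem3p3:
  fixes sm :: "'k::real_normed_field \<Rightarrow> 'a::{ab_group_add,topological_space} \<Rightarrow> 'a"
    and M :: "'a set" and I :: "'i set"
  assumes "tvs sm"
    and "infinite I"
    and "weight_le TYPE('a) I"
  shows "(pointwise_dense_lineable sm M I \<longleftrightarrow> infinitely_pointwise_dense_lineable sm M I)
       \<and> (\<forall>G :: 'g set. (card_of G, card_of I) \<in> ordLess \<longrightarrow>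
            (dense_lineable2 sm M G I \<longleftrightarrow> infinitely_dense_lineable2 sm M G I))"
proof (intro conjI allI impI iffI)
  have "I \<noteq> {}"
    using assms(2) by auto
  show "infinitely_pointwise_dense_lineable sm M I" if "pointwise_dense_lineable sm M I"
    using assms that by (rule infinitely_pointwise_dense_lineable_if_pointwise)
  show "pointwise_dense_lineable sm M I" if "infinitely_pointwise_dense_lineable sm M I"
    using \<open>I \<noteq> {}\<close> that by (rule pointwise_dense_lineable_if_infinitely)
  fix G :: "'g set" assume "|G| <o |I|"
  show "infinitely_dense_lineable2 sm M G I" if "dense_lineable2 sm M G I"
    using assms \<open>|G| <o |I|\<close> that by (rule infinitely_dense_lineable2_if_dense_lineable2)
  show "dense_lineable2 sm M G I" if "infinitely_dense_lineable2 sm M G I"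
    using \<open>I \<noteq> {}\<close> that by (rule dense_lineable2_if_infinitely)
qed

end
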